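(* Let $s>1$ be an integer, $z\in\mathbb{C}$ and $a$ a parameter for which $\Phi(z,s,a)$ is defined. If the integral converges, then \[ \Phi(z,s,a)=\frac{-s}{(s-1)!}\int_0^1\!\!\int_0^1\frac{(xy)^{a-1}\left(-\log(y)\right)^{s-1}}{(1-zxy)\log(xy)}\,dx\,dy, \] and \[ \zeta(s)=\frac{s}{(s-1)!}(-1)^s\int_0^1\!\!\int_0^1\frac{\log^{s-1}(y)}{(1-xy)\log(xy)}\,dx\,dy. \]
   Context: The Lerch transcendent is $\Phi(z,s,a)=\sum_{k=0}^\infty \frac{z^k}{(k+a)^s}$ (where this series converges); $\zeta$ is the Riemann zeta function. *)

theory Defs
  imports "HOL-Analysis.Analysis"
begin

definition lerch_phi :: "complex \<Rightarrow> nat \<Rightarrow> complex \<Rightarrow> complex" where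
  "lerch_phi z s a = (\<Sum>k. z ^ k / (of_nat k + a) ^ s)"

definition lerch_defined :: "complex \<Rightarrow> nat \<Rightarrow> complex \<Rightarrow> bool" where
  "lerch_defined z s a \<longleftrightarrow> (\<forall>k::nat. of_nat k + a \<noteq> 0) \<and>
     summable (\<lambda>k. z ^ k / (of_nat k + a) ^ s)"

definition riemann_zeta :: "nat \<Rightarrow> real" where
  "riemann_zeta s = (\<Sum>n. 1 / real (Suc n) ^ s)"

definition lerch_integrand :: "complex \<Rightarrow> nat \<Rightarrow> complex \<Rightarrow> real \<times> real \<Rightarrow> complex" where
  "lerch_integrand z s a p = (case p of (x, y) \<Rightarrow>
      (complex_of_real (x * y) powr (a - 1)) * complex_of_real ((- ln y) ^ (s - 1))
      / ((1 - z * complex_of_real (x * y)) * complex_of_real (ln (x * y))))"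

definition zeta_integrand :: "nat \<Rightarrow> real \<times> real \<Rightarrow> real" where
  "zeta_integrand s p = (case p of (x, y) \<Rightarrow>
      (ln y) ^ (s - 1) / ((1 - x * y) * ln (x * y)))"

end

theory Submission
  imports Defs "HOL-Complex_Analysis.Cauchy_Integral_Theorem" "HOL-Real_Asymp.Real_Asymp"
begin

(* Expanding 1 / (1 - z x y) as a geometric series reduces the Lerch formula to the kernels
   (x y)^(a + k - 1) (-ln y)^(s - 1) / ln (x y).  Substituting w = x y and integrating y out
   first turns such a double integral with exponent t into
   -1/s * int_0^1 w^(t - 1) (-ln w)^(s - 1) dw = -(s - 1)! / (s t^s), valid for Re t > 0.
   Convergence of the series forces |z| <= 1 and integrability forces Re a > 0; then the
   partial sums are dominated by twice the Lerch integrand, so dominated convergence applies.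
   The zeta formula is the case z = a = 1. *)

primrec log_power_antideriv :: "complex \<Rightarrow> nat \<Rightarrow> complex \<Rightarrow> complex" where
  "log_power_antideriv t 0 z = z powr t / t"
| "log_power_antideriv t (Suc n) z =
     z powr t * (- Ln z) ^ Suc n / t + of_nat (Suc n) / t * log_power_antideriv t n z"

lemma has_field_derivative_log_power_antideriv:
  assumes "t \<noteq> 0" "z \<notin> \<real>\<^sub>\<le>\<^sub>0"
  shows "(log_power_antideriv t n has_field_derivative z powr (t - 1) * (- Ln z) ^ n) (at z)"
proof (induction n)
  case 0
  then show ?case using assms by (auto intro!: derivative_eq_intros)
next
  case (Suc n)
  have "z \<noteq> 0" using assms by auto
  then have powr_eq: "z powr t = z * z powr (t - 1)"
    by (simp add: powr_def exp_diff algebra_simps)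
  have "((\<lambda>z. (- Ln z) ^ Suc n) has_field_derivative
      of_nat (Suc n) * (- inverse z * (- Ln z) ^ n)) (at z)"
    using DERIV_power[OF DERIV_minus[OF has_field_derivative_Ln[OF assms(2)]], of "Suc n"] by simp
  then have "(log_power_antideriv t (Suc n) has_field_derivative
      (t * z powr (t - 1) * (- Ln z) ^ Suc n + of_nat (Suc n) * (- inverse z * (- Ln z) ^ n) * z powr t) / t
      + of_nat (Suc n) / t * (z powr (t - 1) * (- Ln z) ^ n)) (at z)"
    unfolding log_power_antideriv.simps
    by (intro DERIV_add DERIV_cdivide DERIV_cmult DERIV_mult has_field_derivative_powr assms Suc)
  then show ?case
    by (rule DERIV_cong) (use assms \<open>z \<noteq> 0\<close> powr_eq in \<open>simp add: field_simps\<close>)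
qed

lemma log_power_antideriv_1: "t \<noteq> 0 \<Longrightarrow> log_power_antideriv t n 1 = fact n / t ^ Suc n"
  by (induction n) (simp_all add: field_simps)

lemma tendsto_of_real_powr_neg_Ln_power_0:
  fixes t :: complex
  assumes "Re t > 0"
  shows "((\<lambda>w. of_real w powr t * (- Ln (of_real w)) ^ k) \<longlongrightarrow> 0) (at_right (0::real))"
proof (rule tendsto_norm_zero_cancel)
  define \<sigma> where "\<sigma> = Re t"
  have "\<sigma> > 0" using assms by (simp add: \<sigma>_def)
  have "filterlim (\<lambda>w::real. \<sigma> * - ln w) at_top (at_right 0)"
    using \<open>\<sigma> > 0\<close>
    by (intro filterlim_tendsto_pos_mult_at_top tendsto_const)
       (auto simp: filterlim_uminus_at_top ln_at_0)
  from filterlim_compose[OF tendsto_power_div_exp_0 this]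
  have "((\<lambda>w. (\<sigma> * - ln w) ^ k / exp (\<sigma> * - ln w) / \<sigma> ^ k) \<longlongrightarrow> 0 / \<sigma> ^ k) (at_right 0)"
    by (intro tendsto_divide tendsto_const) (use \<open>\<sigma> > 0\<close> in auto)
  moreover have "eventually (\<lambda>w. (\<sigma> * - ln w) ^ k / exp (\<sigma> * - ln w) / \<sigma> ^ k =
      norm (of_real w powr t * (- Ln (of_real w)) ^ k)) (at_right (0::real))"
  proof (rule eventually_at_rightI[of 0 1])
    fix w :: real
    assume w: "w \<in> {0<..<1}"
    then have "norm (of_real w powr t * (- Ln (of_real w)) ^ k) = w powr \<sigma> * (- ln w) ^ k"
      by (simp add: norm_mult norm_powr_real_powr Ln_of_real norm_power \<sigma>_def
          abs_of_nonneg power_abs[symmetric])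
    also have "\<dots> = (\<sigma> * - ln w) ^ k / exp (\<sigma> * - ln w) / \<sigma> ^ k"
      using w \<open>\<sigma> > 0\<close> by (simp add: powr_def power_mult_distrib[symmetric] exp_minus field_simps)
    finally show "(\<sigma> * - ln w) ^ k / exp (\<sigma> * - ln w) / \<sigma> ^ k =
        norm (of_real w powr t * (- Ln (of_real w)) ^ k)" ..
  qed simp
  ultimately show "((\<lambda>w. norm (of_real w powr t * (- Ln (of_real w)) ^ k)) \<longlongrightarrow> 0) (at_right 0)"
    by (simp add: Lim_transform_eventually)
qed

lemma tendsto_log_power_antideriv_0:
  assumes "Re t > 0"
  shows "((\<lambda>w. log_power_antideriv t n (of_real w)) \<longlongrightarrow> 0) (at_right (0::real))"
proof (induction n)
  case 0
  then show ?case
    using tendsto_of_real_powr_neg_Ln_power_0[OF assms, of 0] by (auto intro: tendsto_divide_zero)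
next
  case (Suc n)
  have "((\<lambda>w. log_power_antideriv t (Suc n) (of_real w)) \<longlongrightarrow> 0 / t + of_nat (Suc n) / t * 0)
      (at_right (0::real))"
    unfolding log_power_antideriv.simps
    by (intro tendsto_add tendsto_divide tendsto_mult tendsto_const Suc.IH
        tendsto_of_real_powr_neg_Ln_power_0 assms) (use assms in auto)
  then show ?case by simp
qed

lemma set_integral_powr_neg_ln_power:
  fixes t :: complex
  assumes "Re t > 0"
    and "set_integrable lborel {0<..<1::real} (\<lambda>w. of_real w powr (t - 1) * of_real ((- ln w) ^ n))"
  shows "(LINT w:{0<..<1}|lborel. of_real w powr (t - 1) * of_real ((- ln w) ^ n)) = fact n / t ^ Suc n"
proof -
  have "t \<noteq> 0" using assms by auto
  have Ioo: "einterval 0 1 = {0<..<(1::real)}"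
    by (auto simp: einterval_def zero_ereal_def one_ereal_def)
  have "(LBINT w=0..1. of_real w powr (t - 1) * of_real ((- ln w) ^ n)) = fact n / t ^ Suc n - 0"
  proof (rule interval_integral_FTC_integrable[where F = "\<lambda>w. log_power_antideriv t n (of_real w)"])
    fix x :: real
    assume "0 < ereal x" "ereal x < 1"
    then have x: "0 < x" "x < 1" by auto
    then have "complex_of_real x \<notin> \<real>\<^sub>\<le>\<^sub>0" by (auto simp: complex_nonpos_Reals_iff)
    from has_vector_derivative_real_field[OF has_field_derivative_log_power_antideriv[OF \<open>t \<noteq> 0\<close> this]]
    show "((\<lambda>w. log_power_antideriv t n (of_real w)) has_vector_derivative
          of_real x powr (t - 1) * of_real ((- ln x) ^ n)) (at x)"
      using x by (simp add: Ln_of_real)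
    show "isCont (\<lambda>w. of_real w powr (t - 1) * of_real ((- ln w) ^ n)) x"
      using x by (auto intro!: continuous_intros simp: complex_nonpos_Reals_iff)
  next
    show "set_integrable lborel (einterval 0 1) (\<lambda>w. of_real w powr (t - 1) * of_real ((- ln w) ^ n))"
      using assms(2) by (simp add: Ioo)
  next
    show "(((\<lambda>w. log_power_antideriv t n (of_real w)) \<circ> real_of_ereal) \<longlongrightarrow> 0) (at_right 0)"
      using tendsto_log_power_antideriv_0[OF assms(1)]
      by (simp add: zero_ereal_def ereal_tendsto_simps)
  next
    have "isCont (log_power_antideriv t n) 1"
      by (rule DERIV_isCont[OF has_field_derivative_log_power_antideriv[OF \<open>t \<noteq> 0\<close>]])
         (auto simp: complex_nonpos_Reals_iff)
    then have "isCont (\<lambda>w. log_power_antideriv t n (of_real w)) (1::real)"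
      by (auto intro!: continuous_intros isCont_o2[where f = of_real])
    then show "(((\<lambda>w. log_power_antideriv t n (of_real w)) \<circ> real_of_ereal) \<longlongrightarrow> fact n / t ^ Suc n)
        (at_left 1)"
      using log_power_antideriv_1[OF \<open>t \<noteq> 0\<close>, of n]
      by (simp add: isCont_def filterlim_at_split one_ereal_def ereal_tendsto_simps)
  qed simp
  then show ?thesis
    by (simp add: interval_lebesgue_integral_le_eq Ioo)
qed

lemma indicator_Ioo_0_scale:
  fixes c x :: real
  assumes "c > 0"
  shows "indicator {0<..<c} (c * x) = (indicator {0<..<1} x :: real)"
  using assms by (auto simp: indicator_def zero_less_mult_iff mult_less_cancel_left2)

lemma set_integrable_Ioo_0_1_scale_iff:
  fixes q :: "real \<Rightarrow> 'a::{banach, second_countable_topology}"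
  assumes "c > 0"
  shows "set_integrable lborel {0<..<1} (\<lambda>x. q (c * x)) \<longleftrightarrow> set_integrable lborel {0<..<c} q"
  using lborel_integrable_real_affine_iff[of c "\<lambda>w. indicator {0<..<c} w *\<^sub>R q w" 0] assms
  by (simp add: set_integrable_def indicator_Ioo_0_scale)

lemma set_integral_Ioo_0_1_scale:
  fixes q :: "real \<Rightarrow> 'a::{banach, second_countable_topology}"
  assumes "c > 0"
  shows "(LINT x:{0<..<1}|lborel. q (c * x)) = (1 / c) *\<^sub>R (LINT w:{0<..<c}|lborel. q w)"
  using lborel_integral_real_affine[of c "\<lambda>w. indicator {0<..<c} w *\<^sub>R q w" 0] assms
  by (simp add: set_lebesgue_integral_def indicator_Ioo_0_scale)

(* The image of the unit square under (x, y) \<mapsto> (y, x y). *)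
definition unit_triangle :: "(real \<times> real) set" where
  "unit_triangle = {(y, w). 0 < w \<and> w < y \<and> y < 1}"

lemma indicator_unit_triangle:
  "indicator unit_triangle (y, w) = (indicator {0<..<1} y * indicator {0<..<y} w :: real)"
  by (auto simp: unit_triangle_def indicator_def)

lemma integral_unit_square_section:
  fixes H L :: "real \<Rightarrow> 'a::{real_normed_field, banach, second_countable_topology}"
  shows "(\<integral>x. indicator ({0<..<1} \<times> {0<..<1}) (x, y) *\<^sub>R (H (x * y) * L y) \<partial>lborel)
       = (\<integral>w. indicator unit_triangle (y, w) *\<^sub>R (L y / of_real y * H w) \<partial>lborel)"
proof (cases "0 < y \<and> y < 1")
  case True
  have "(\<integral>x. indicator ({0<..<1} \<times> {0<..<1}) (x, y) *\<^sub>R (H (x * y) * L y) \<partial>lborel)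
      = (LINT x:{0<..<1}|lborel. H (y * x) * L y)"
    unfolding set_lebesgue_integral_def
    by (rule Bochner_Integration.integral_cong) (use True in \<open>auto simp: indicator_def mult.commute\<close>)
  also have "\<dots> = (LINT x:{0<..<1}|lborel. H (y * x)) * L y"
    by simp
  also have "\<dots> = L y / of_real y * (LINT w:{0<..<y}|lborel. H w)"
    using True set_integral_Ioo_0_1_scale[of y H] by (simp add: scaleR_conv_of_real divide_inverse)
  also have "\<dots> = (LINT w:{0<..<y}|lborel. L y / of_real y * H w)"
    by simp
  also have "\<dots> = (\<integral>w. indicator unit_triangle (y, w) *\<^sub>R (L y / of_real y * H w) \<partial>lborel)"
    unfolding set_lebesgue_integral_def
    by (rule Bochner_Integration.integral_cong) (use True in \<open>auto simp: indicator_unit_triangle\<close>)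
  finally show ?thesis .
qed (auto simp: indicator_unit_triangle indicator_times)

lemma integrable_unit_square_section:
  fixes H L :: "real \<Rightarrow> 'a::{real_normed_field, banach, second_countable_topology}"
  assumes "integrable lborel (\<lambda>x. indicator ({0<..<1} \<times> {0<..<1}) (x, y) *\<^sub>R (H (x * y) * L y))"
  shows "integrable lborel (\<lambda>w. indicator unit_triangle (y, w) *\<^sub>R (L y / of_real y * H w))"
proof (cases "0 < y \<and> y < 1 \<and> L y \<noteq> 0")
  case True
  then have "set_integrable lborel {0<..<1} (\<lambda>x. H (y * x) * L y)"
    using assms by (simp add: set_integrable_def indicator_times mult.commute)
  then have "set_integrable lborel {0<..<y} H"
    using True by (simp add: set_integrable_Ioo_0_1_scale_iff)
  then have "set_integrable lborel {0<..<y} (\<lambda>w. L y / of_real y * H w)"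
    by (rule set_integrable_mult_right)
  then show ?thesis
    using True by (simp add: set_integrable_def indicator_unit_triangle mult.left_commute)
qed (auto simp: indicator_unit_triangle)

lemma integrable_unit_triangle_if_unit_square:
  fixes H L :: "real \<Rightarrow> 'a::{real_normed_field, banach, second_countable_topology}"
  assumes [measurable]: "H \<in> borel_measurable borel" "L \<in> borel_measurable borel"
    and "integrable (lborel \<Otimes>\<^sub>M lborel)
      (\<lambda>(x, y). indicator ({0<..<1} \<times> {0<..<1}) (x, y) *\<^sub>R (H (x * y) * L y))"
  shows "integrable (lborel \<Otimes>\<^sub>M lborel)
      (\<lambda>(y, w). indicator unit_triangle (y, w) *\<^sub>R (L y / of_real y * H w))"
proof (rule lborel_pair.Fubini_integrable)
  define f where "f x y = indicator ({0<..<1} \<times> {0<..<1}) (x, y) *\<^sub>R (H (x * y) * L y)" for x y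
  define F where "F y w = indicator unit_triangle (y, w) *\<^sub>R (L y / of_real y * H w)" for y w
  show "(\<lambda>(y, w). F y w) \<in> borel_measurable (lborel \<Otimes>\<^sub>M lborel)"
    unfolding F_def unit_triangle_def by measurable
  have norm_f: "norm (f x y) = indicator ({0<..<1} \<times> {0<..<1}) (x, y) *\<^sub>R (norm (H (x * y)) * norm (L y))"
    for x y by (simp add: f_def norm_mult)
  have norm_F: "norm (F y w) = indicator unit_triangle (y, w) *\<^sub>R (norm (L y) / y * norm (H w))" for y w
    by (auto simp: F_def unit_triangle_def indicator_def norm_mult norm_divide)
  have "(\<integral>x. norm (f x y) \<partial>lborel) = (\<integral>w. norm (F y w) \<partial>lborel)" for y
    unfolding norm_f norm_F
    using integral_unit_square_section[where H = "\<lambda>w. norm (H w)" and L = "\<lambda>y. norm (L y)"] by simp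
  moreover have "integrable lborel (\<lambda>y. \<integral>x. norm (f x y) \<partial>lborel)"
    using lborel_pair.integrable_snd[of "\<lambda>x y. norm (f x y)"] integrable_norm[OF assms(3)]
    by (simp add: split_beta' f_def)
  ultimately show "integrable lborel (\<lambda>y. \<integral>w. norm ((\<lambda>(y, w). F y w) (y, w)) \<partial>lborel)"
    by simp
  show "AE y in lborel. integrable lborel (\<lambda>w. (\<lambda>(y, w). F y w) (y, w))"
    using lborel_pair.AE_integrable_snd[OF assms(3)]
    unfolding prod.case F_def by eventually_elim (rule integrable_unit_square_section)
qed

lemma unit_square_substitution:
  fixes H L :: "real \<Rightarrow> 'a::{real_normed_field, banach, second_countable_topology}"
  assumes [measurable]: "H \<in> borel_measurable borel" "L \<in> borel_measurable borel"
    and "set_integrable lborel ({0<..<1} \<times> {0<..<1}) (\<lambda>(x, y). H (x * y) * L y)"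
  shows "set_integrable lborel {0<..<1} (\<lambda>w. H w * (LINT y:{w<..<1}|lborel. L y / of_real y))"
    and "(LINT p:{0<..<1} \<times> {0<..<1}|lborel. (\<lambda>(x, y). H (x * y) * L y) p)
       = (LINT w:{0<..<1}|lborel. H w * (LINT y:{w<..<1}|lborel. L y / of_real y))"
proof -
  define f where "f x y = indicator ({0<..<1} \<times> {0<..<1}) (x, y) *\<^sub>R (H (x * y) * L y)" for x y
  define F where "F y w = indicator unit_triangle (y, w) *\<^sub>R (L y / of_real y * H w)" for y w
  have f: "integrable (lborel \<Otimes>\<^sub>M lborel) (\<lambda>(x, y). f x y)"
    using assms(3) by (simp add: set_integrable_def lborel_prod f_def split_beta')
  then have F: "integrable (lborel \<Otimes>\<^sub>M lborel) (\<lambda>(y, w). F y w)"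
    unfolding f_def F_def by (rule integrable_unit_triangle_if_unit_square[OF assms(1,2)])
  have F_section: "(\<integral>y. F y w \<partial>lborel)
      = indicator {0<..<1} w *\<^sub>R (H w * (LINT y:{w<..<1}|lborel. L y / of_real y))" for w
  proof -
    have "(\<integral>y. F y w \<partial>lborel)
        = (\<integral>y. indicator {0<..<1} w *\<^sub>R (H w * (indicator {w<..<1} y *\<^sub>R (L y / of_real y))) \<partial>lborel)"
      by (rule Bochner_Integration.integral_cong) (auto simp: F_def unit_triangle_def indicator_def)
    then show ?thesis
      by (simp only: integral_scaleR_right integral_mult_right_zero set_lebesgue_integral_def)
  qed
  show "set_integrable lborel {0<..<1} (\<lambda>w. H w * (LINT y:{w<..<1}|lborel. L y / of_real y))"
    using lborel_pair.integrable_snd[OF F] by (simp add: set_integrable_def F_section)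
  have "(LINT p:{0<..<1} \<times> {0<..<1}|lborel. (\<lambda>(x, y). H (x * y) * L y) p)
      = (\<integral>y. \<integral>x. f x y \<partial>lborel \<partial>lborel)"
    using lborel_pair.integral_snd[OF f]
    by (simp add: set_lebesgue_integral_def lborel_prod f_def split_beta')
  also have "\<dots> = (\<integral>y. \<integral>w. F y w \<partial>lborel \<partial>lborel)"
    by (simp add: f_def F_def integral_unit_square_section)
  also have "\<dots> = (\<integral>w. \<integral>y. F y w \<partial>lborel \<partial>lborel)"
    using lborel_pair.Fubini_integral[OF F] by simp
  finally show "(LINT p:{0<..<1} \<times> {0<..<1}|lborel. (\<lambda>(x, y). H (x * y) * L y) p)
      = (LINT w:{0<..<1}|lborel. H w * (LINT y:{w<..<1}|lborel. L y / of_real y))"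
    by (simp add: set_lebesgue_integral_def F_section)
qed

lemma set_integral_neg_ln_power_divide:
  fixes w :: real
  assumes "0 < w" "w < 1"
  shows "(LINT y:{w<..<1}|lborel. (- ln y) ^ n / y) = (- ln w) ^ Suc n / Suc n"
proof -
  define G where "G y = - ((- ln y) ^ Suc n) / Suc n" for y :: real
  have "(LBINT y=ereal w..ereal 1. (- ln y) ^ n / y) = G 1 - G w"
  proof (rule interval_integral_FTC_finite)
    show "continuous_on {min w 1..max w 1} (\<lambda>y. (- ln y) ^ n / y)"
      using assms by (auto intro!: continuous_intros)
    fix x
    assume "min w 1 \<le> x" "x \<le> max w 1"
    then have "x > 0" using assms by auto
    have "((\<lambda>y. - ln y) has_real_derivative - (1 / x)) (at x)"
      using \<open>x > 0\<close> by (auto intro!: derivative_eq_intros)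
    from DERIV_power[OF this, of "Suc n"]
    have "(G has_real_derivative - (Suc n * (- (1 / x) * (- ln x) ^ n)) / Suc n) (at x)"
      unfolding G_def by (intro DERIV_cdivide DERIV_minus) simp
    then have "(G has_real_derivative (- ln x) ^ n / x) (at x)"
      by (rule DERIV_cong) (simp del: of_nat_Suc)
    then show "(G has_vector_derivative (- ln x) ^ n / x) (at x within {min w 1..max w 1})"
      by (simp add: has_real_derivative_iff_has_vector_derivative has_vector_derivative_at_within)
  qed
  moreover have "einterval (ereal w) (ereal 1) = {w<..<1}"
    by (auto simp: einterval_def)
  ultimately show ?thesis
    using assms by (simp add: interval_lebesgue_integral_le_eq G_def)
qed

(* The Lerch integrand with z = 0, exponent s = n + 1 and t in place of a. *)
definition log_kernel :: "complex \<Rightarrow> nat \<Rightarrow> real \<times> real \<Rightarrow> complex" where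
  "log_kernel t n = (\<lambda>(x, y). of_real (x * y) powr (t - 1) / of_real (ln (x * y)) * of_real ((- ln y) ^ n))"

lemma set_integral_log_kernel:
  fixes t :: complex
  assumes "Re t > 0" and "set_integrable lborel ({0<..<1} \<times> {0<..<1}) (log_kernel t n)"
  shows "(LINT p:{0<..<1} \<times> {0<..<1}|lborel. log_kernel t n p) = - fact n / (of_nat (Suc n) * t ^ Suc n)"
proof -
  define H where "H w = of_real w powr (t - 1) / of_real (ln w)" for w :: real
  define L where "L y = complex_of_real ((- ln y) ^ n)" for y :: real
  define K :: "real \<Rightarrow> complex" where "K w = of_real w powr (t - 1) * of_real ((- ln w) ^ n)" for w
  have kernel: "log_kernel t n = (\<lambda>(x, y). H (x * y) * L y)"
    by (simp add: log_kernel_def H_def L_def)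
  have [measurable]: "H \<in> borel_measurable borel" "L \<in> borel_measurable borel"
    unfolding H_def L_def by measurable
  have inner: "H w * (LINT y:{w<..<1}|lborel. L y / of_real y) = K w * (- 1 / of_nat (Suc n))"
    if "0 < w" "w < 1" for w
  proof -
    have "(LINT y:{w<..<1}|lborel. L y / of_real y)
        = (LINT y:{w<..<1}|lborel. complex_of_real ((- ln y) ^ n / y))"
      by (simp add: L_def)
    also have "\<dots> = of_real ((- ln w) ^ Suc n / Suc n)"
      by (simp only: set_integral_complex_of_real set_integral_neg_ln_power_divide[OF that])
    finally have I: "(LINT y:{w<..<1}|lborel. L y / of_real y) = of_real ((- ln w) ^ Suc n / Suc n)" .
    have "ln w \<noteq> 0"
      using that by simp
    then show ?thesis
      unfolding I H_def K_def by (simp add: field_simps del: of_nat_Suc)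
  qed
  have "set_integrable lborel {0<..<1} (\<lambda>w. H w * (LINT y:{w<..<1}|lborel. L y / of_real y))"
    using unit_square_substitution(1)[of H L] assms(2) by (simp add: kernel)
  then have "set_integrable lborel {0<..<1} (\<lambda>w. K w * (- 1 / of_nat (Suc n)))"
    by (rule set_integrable_cong[THEN iffD1, rotated -1]) (auto simp: inner)
  then have K_integrable: "set_integrable lborel {0<..<1} K"
    by (subst set_integrable_mult_left_iff[symmetric, of "- 1 / of_nat (Suc n)"]) (simp_all del: of_nat_Suc)
  have "(LINT p:{0<..<1} \<times> {0<..<1}|lborel. log_kernel t n p)
      = (LINT w:{0<..<1}|lborel. H w * (LINT y:{w<..<1}|lborel. L y / of_real y))"
    using unit_square_substitution(2)[of H L] assms(2) by (simp add: kernel)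
  also have "\<dots> = (LINT w:{0<..<1}|lborel. K w * (- 1 / of_nat (Suc n)))"
    by (rule set_lebesgue_integral_cong) (auto simp: inner)
  also have "\<dots> = (LINT w:{0<..<1}|lborel. K w) * (- 1 / of_nat (Suc n))"
    by (rule set_integral_mult_left)
  also have "(LINT w:{0<..<1}|lborel. K w) = fact n / t ^ Suc n"
    unfolding K_def by (rule set_integral_powr_neg_ln_power[OF assms(1) K_integrable[unfolded K_def]])
  finally show ?thesis
    by (simp add: field_simps del: of_nat_Suc)
qed

lemma norm_log_kernel_mono:
  assumes "p \<in> {0<..<1} \<times> {0<..<1}" "Re t \<le> Re t'"
  shows "norm (log_kernel t' n p) \<le> norm (log_kernel t n p)"
proof -
  obtain x y where p: "p = (x, y)" "0 < x" "x < 1" "0 < y" "y < 1"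
    using assms(1) by auto
  then have "0 < x * y" "x * y < 1"
    using mult_strict_mono[of x 1 y 1] by auto
  then have "(x * y) powr (Re t' - 1) \<le> (x * y) powr (Re t - 1)"
    using assms(2) by (intro powr_mono') auto
  moreover have "ln (x * y) < 0"
    using \<open>0 < x * y\<close> \<open>x * y < 1\<close> by simp
  ultimately show ?thesis
    using \<open>0 < x * y\<close>
    by (simp add: p(1) log_kernel_def norm_mult norm_divide norm_powr_real_powr del: of_real_mult)
       (intro divide_right_mono_neg mult_right_mono; simp)
qed

lemma set_integral_norm_log_kernel_ge:
  fixes \<epsilon> :: real
  assumes "set_integrable lborel ({0<..<1} \<times> {0<..<1}) (log_kernel t n)" "0 < \<epsilon>" "Re t \<le> \<epsilon>"
  shows "fact n / (real (Suc n) * \<epsilon> ^ Suc n) \<le> (LINT p:{0<..<1} \<times> {0<..<1}|lborel. norm (log_kernel t n p))"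
proof -
  define S :: "(real \<times> real) set" where "S = {0<..<1} \<times> {0<..<1}"
  have mono: "norm (log_kernel (of_real \<epsilon>) n p) \<le> norm (log_kernel t n p)" if "p \<in> S" for p
    using norm_log_kernel_mono[of p t "of_real \<epsilon>"] assms(3) that by (simp add: S_def)
  have integrable: "set_integrable lborel S (log_kernel (of_real \<epsilon>) n)"
  proof (rule set_integrable_bound[OF assms(1)[folded S_def]])
    show "set_borel_measurable lborel S (log_kernel (of_real \<epsilon>) n)"
      unfolding set_borel_measurable_def S_def log_kernel_def lborel_prod[symmetric] by measurable
    show "AE p in lborel. p \<in> S \<longrightarrow> norm (log_kernel (of_real \<epsilon>) n p) \<le> norm (log_kernel t n p)"
      using mono by simp
  qed
  then have "fact n / (real (Suc n) * \<epsilon> ^ Suc n) = norm (LINT p:S|lborel. log_kernel (of_real \<epsilon>) n p)"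
    using set_integral_log_kernel[of "of_real \<epsilon>" n] assms(2)
    by (simp add: S_def norm_divide norm_mult norm_power del: of_nat_Suc)
  also have "\<dots> \<le> (LINT p:S|lborel. norm (log_kernel (of_real \<epsilon>) n p))"
    using integral_norm_bound[of lborel "\<lambda>p. indicator S p *\<^sub>R log_kernel (of_real \<epsilon>) n p"]
    by (simp add: set_lebesgue_integral_def)
  also have "\<dots> \<le> (LINT p:S|lborel. norm (log_kernel t n p))"
  proof (rule set_integral_mono)
    have norm_integrable: "set_integrable lborel S (\<lambda>p. norm (g p))"
      if "set_integrable lborel S g" for g :: "real \<times> real \<Rightarrow> complex"
      using integrable_norm[OF that[unfolded set_integrable_def]] by (simp add: set_integrable_def)
    show "set_integrable lborel S (\<lambda>p. norm (log_kernel (of_real \<epsilon>) n p))"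
      using integrable by (rule norm_integrable)
    show "set_integrable lborel S (\<lambda>p. norm (log_kernel t n p))"
      using assms(1)[folded S_def] by (rule norm_integrable)
  qed (rule mono)
  finally show ?thesis
    by (simp add: S_def)
qed

lemma log_kernel_integrable_imp_Re_pos:
  assumes "set_integrable lborel ({0<..<1} \<times> {0<..<1}) (log_kernel t n)"
  shows "Re t > 0"
proof (rule ccontr)
  (* Otherwise the kernel would dominate the kernels with small real exponents,
     whose integrals blow up like \<epsilon>^-(n+1). *)
  assume "\<not> Re t > 0"
  define C where "C = (LINT p:{0<..<1} \<times> {0<..<1}|lborel. norm (log_kernel t n p))"
  define c :: real where "c = fact n / Suc n"
  obtain \<epsilon> :: real where "0 < \<epsilon>" "\<epsilon> < min 1 (c / (\<bar>C\<bar> + 1))"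
    using dense[of 0 "min 1 (c / (\<bar>C\<bar> + 1))"] by (auto simp: c_def)
  then have "\<bar>C\<bar> + 1 < c / \<epsilon>"
    by (simp add: field_simps)
  also have "c / \<epsilon> \<le> c / \<epsilon> ^ Suc n"
    using \<open>0 < \<epsilon>\<close> \<open>\<epsilon> < min 1 _\<close>
    by (intro divide_left_mono) (auto simp: c_def power_le_one mult_left_le_one_le)
  also have "\<dots> \<le> C"
    using set_integral_norm_log_kernel_ge[OF assms \<open>0 < \<epsilon>\<close>] \<open>\<not> Re t > 0\<close> \<open>0 < \<epsilon>\<close>
    by (simp add: C_def c_def divide_divide_eq_left)
  finally show False
    by simp
qed

lemma tendsto_set_integral_mult_one_minus_power:
  fixes f g :: "'a \<Rightarrow> 'b::{real_normed_field, banach, second_countable_topology}"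
  assumes "set_integrable M A f" and [measurable]: "g \<in> borel_measurable M"
    and "\<And>x. x \<in> A \<Longrightarrow> norm (g x) < 1"
  shows "(\<lambda>N. LINT x:A|M. f x * (1 - g x ^ N)) \<longlonglongrightarrow> (LINT x:A|M. f x)"
proof -
  define F where "F x = indicator A x *\<^sub>R f x" for x
  have F_integrable: "integrable M F"
    using assms(1) by (simp add: set_integrable_def F_def[abs_def])
  then have [measurable]: "F \<in> borel_measurable M"
    by (rule borel_measurable_integrable)
  have "(\<lambda>N. \<integral>x. F x * (1 - g x ^ N) \<partial>M) \<longlonglongrightarrow> (\<integral>x. F x \<partial>M)"
  proof (rule integral_dominated_convergence[where w = "\<lambda>x. 2 * norm (F x)"])
    show "integrable M (\<lambda>x. 2 * norm (F x))"
      using F_integrable by (intro integrable_mult_right integrable_norm)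
    show "AE x in M. (\<lambda>N. F x * (1 - g x ^ N)) \<longlonglongrightarrow> F x"
    proof (rule AE_I2)
      fix x
      show "(\<lambda>N. F x * (1 - g x ^ N)) \<longlonglongrightarrow> F x"
      proof (cases "x \<in> A")
        case True
        have "(\<lambda>N. F x * (1 - g x ^ N)) \<longlonglongrightarrow> F x * (1 - 0)"
          using assms(3)[OF True] by (intro tendsto_intros)
        then show ?thesis by simp
      qed (simp add: F_def)
    qed
    show "AE x in M. norm (F x * (1 - g x ^ N)) \<le> 2 * norm (F x)" for N
    proof (rule AE_I2)
      fix x
      show "norm (F x * (1 - g x ^ N)) \<le> 2 * norm (F x)"
      proof (cases "x \<in> A")
        case True
        have "norm (1 - g x ^ N) \<le> 1 + norm (g x) ^ N"
          using norm_triangle_ineq4[of 1 "g x ^ N"] by (simp add: norm_power)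
        also have "\<dots> \<le> 2"
          using assms(3)[OF True] by (simp add: power_le_one)
        finally have "norm (1 - g x ^ N) \<le> 2" .
        from mult_left_mono[OF this norm_ge_zero[of "F x"]] show ?thesis
          by (simp add: norm_mult mult.commute)
      qed (simp add: F_def)
    qed
  qed simp_all
  moreover have "F x * (1 - g x ^ N) = indicator A x *\<^sub>R (f x * (1 - g x ^ N))" for x N
    by (simp add: F_def)
  ultimately show ?thesis
    by (simp add: set_lebesgue_integral_def F_def)
qed

lemma lerch_defined_imp_norm_le_1:
  assumes "lerch_defined z s a"
  shows "norm z \<le> 1"
proof (rule ccontr)
  assume "\<not> norm z \<le> 1"
  define c where "c = norm a + 1"
  have "c > 0"
    by (simp add: c_def add_nonneg_pos)
  have "1 < norm z"
    using \<open>\<not> norm z \<le> 1\<close> by simp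
  moreover have "filterlim (\<lambda>k::nat. r ^ k / (real k + c) ^ s) at_top at_top" if "1 < r" for r
    using that \<open>c > 0\<close> by real_asymp
  ultimately have "filterlim (\<lambda>k::nat. norm z ^ k / (real k + c) ^ s) at_top at_top"
    by blast
  then have "eventually (\<lambda>k. 1 \<le> norm z ^ k / (real k + c) ^ s) sequentially"
    by (simp add: filterlim_at_top)
  moreover have "eventually (\<lambda>k. norm (z ^ k / (of_nat k + a) ^ s) < 1) sequentially"
  proof (rule order_tendstoD(2))
    show "(\<lambda>k. norm (z ^ k / (of_nat k + a) ^ s)) \<longlonglongrightarrow> 0"
      using assms unfolding lerch_defined_def by (intro tendsto_norm_zero summable_LIMSEQ_zero) simp
  qed simp
  ultimately obtain k where k:
    "1 \<le> norm z ^ k / (real k + c) ^ s" "norm (z ^ k / (of_nat k + a) ^ s) < 1"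
    using eventually_conj eventually_sequentially by (metis (no_types, lifting) order.refl)
  have "0 < norm (of_nat k + a)"
    using assms by (simp add: lerch_defined_def)
  moreover have "norm (of_nat k + a) \<le> real k + c"
    using norm_triangle_ineq[of "of_nat k" a] by (simp add: c_def)
  ultimately have "norm z ^ k / (real k + c) ^ s \<le> norm z ^ k / norm (of_nat k + a) ^ s"
    using \<open>c > 0\<close> by (intro divide_left_mono power_mono mult_pos_pos zero_less_power) auto
  also have "\<dots> = norm (z ^ k / (of_nat k + a) ^ s)"
    by (simp add: norm_divide norm_power)
  finally show False
    using k by simp
qed

lemma norm_mult_fst_mult_snd_lt_1:
  assumes "p \<in> {0<..<1} \<times> {0<..<1}" "norm z \<le> 1"
  shows "norm (z * complex_of_real (fst p * snd p)) < 1"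
proof -
  obtain x y where "p = (x, y)" "0 < x" "x < 1" "0 < y" "y < 1"
    using assms(1) by auto
  then have "norm (complex_of_real (fst p * snd p)) < 1"
    using mult_strict_mono[of x 1 y 1] by (simp add: norm_mult)
  moreover have "norm (z * complex_of_real (fst p * snd p)) \<le> norm (complex_of_real (fst p * snd p))"
    using assms(2) by (simp add: norm_mult mult_left_le_one_le)
  ultimately show ?thesis
    by simp
qed

lemma log_kernel_eq_lerch_integrand:
  assumes "p \<in> {0<..<1} \<times> {0<..<1}" "norm z \<le> 1"
  shows "log_kernel (a + of_nat k) n p
       = lerch_integrand z (Suc n) a p * (1 - z * of_real (fst p * snd p)) * of_real (fst p * snd p) ^ k"
proof -
  obtain x y where p: "p = (x, y)" "0 < x" "0 < y"
    using assms(1) by auto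
  define v where "v = complex_of_real (x * y)"
  have "v \<noteq> 0"
    using p by (simp add: v_def)
  have "a + of_nat k - 1 = (a - 1) + of_nat k"
    by simp
  then have "v powr (a + of_nat k - 1) = v powr (a - 1) * v ^ k"
    by (simp only: powr_add powr_nat'[OF disjI1[OF \<open>v \<noteq> 0\<close>]])
  moreover have "1 - z * v \<noteq> 0"
    using norm_mult_fst_mult_snd_lt_1[OF assms] by (auto simp: p v_def)
  ultimately show ?thesis
    unfolding p v_def[symmetric] log_kernel_def lerch_integrand_def
    by (cases "ln (x * y) = 0") (simp_all add: v_def field_simps del: of_real_mult)
qed

lemma set_integrable_log_kernel_shift:
  assumes "norm z \<le> 1" "set_integrable lborel ({0<..<1} \<times> {0<..<1}) (lerch_integrand z (Suc n) a)"
  shows "set_integrable lborel ({0<..<1} \<times> {0<..<1}) (log_kernel (a + of_nat k) n)"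
proof (rule set_integrable_bound[where f = "\<lambda>p. 2 *\<^sub>R lerch_integrand z (Suc n) a p"])
  show "set_integrable lborel ({0<..<1} \<times> {0<..<1}) (\<lambda>p. 2 *\<^sub>R lerch_integrand z (Suc n) a p)"
    using assms(2) by simp
  show "set_borel_measurable lborel ({0<..<1} \<times> {0<..<1}) (log_kernel (a + of_nat k) n)"
    unfolding set_borel_measurable_def log_kernel_def lborel_prod[symmetric] by measurable
  have "norm (log_kernel (a + of_nat k) n p) \<le> norm (2 *\<^sub>R lerch_integrand z (Suc n) a p)"
    if p: "p \<in> {0<..<1} \<times> {0<..<1}" for p
  proof -
    define u where "u = complex_of_real (fst p * snd p)"
    have "norm (z * u) < 1" "norm u < 1"
      using norm_mult_fst_mult_snd_lt_1[OF p assms(1)] norm_mult_fst_mult_snd_lt_1[OF p, of 1]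
      by (simp_all add: u_def del: of_real_mult)
    then have "norm (1 - z * u) \<le> 2" "norm (u ^ k) \<le> 1"
      using norm_triangle_ineq4[of 1 "z * u"] by (simp_all add: norm_power power_le_one)
    then have "norm ((1 - z * u) * u ^ k) \<le> 2 * 1"
      unfolding norm_mult by (intro mult_mono) auto
    from mult_left_mono[OF this norm_ge_zero[of "lerch_integrand z (Suc n) a p"]] show ?thesis
      using log_kernel_eq_lerch_integrand[OF p assms(1)] by (simp add: u_def norm_mult mult.assoc)
  qed
  then show "AE p in lborel. p \<in> {0<..<1} \<times> {0<..<1} \<longrightarrow>
      norm (log_kernel (a + of_nat k) n p) \<le> norm (2 *\<^sub>R lerch_integrand z (Suc n) a p)"
    by simp
qed

lemma set_integral_lerch_partial_sum:
  assumes "norm z \<le> 1" "set_integrable lborel ({0<..<1} \<times> {0<..<1}) (lerch_integrand z (Suc n) a)"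
  shows "(\<Sum>k<N. z ^ k * (LINT p:{0<..<1} \<times> {0<..<1}|lborel. log_kernel (a + of_nat k) n p))
       = (LINT p:{0<..<1} \<times> {0<..<1}|lborel.
            lerch_integrand z (Suc n) a p * (1 - (z * of_real (fst p * snd p)) ^ N))"
proof -
  define S :: "(real \<times> real) set" where "S = {0<..<1} \<times> {0<..<1}"
  have "(\<Sum>k<N. z ^ k * (LINT p:S|lborel. log_kernel (a + of_nat k) n p))
      = (\<Sum>k<N. \<integral>p. z ^ k * (indicator S p *\<^sub>R log_kernel (a + of_nat k) n p) \<partial>lborel)"
    unfolding set_lebesgue_integral_def by (simp only: integral_mult_right_zero)
  also have "\<dots> = (\<integral>p. (\<Sum>k<N. z ^ k * (indicator S p *\<^sub>R log_kernel (a + of_nat k) n p)) \<partial>lborel)"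
    using set_integrable_log_kernel_shift[OF assms] unfolding set_integrable_def S_def
    by (intro Bochner_Integration.integral_sum[symmetric] integrable_mult_right)
  also have "\<dots> = (LINT p:S|lborel. (\<Sum>k<N. z ^ k * log_kernel (a + of_nat k) n p))"
    unfolding set_lebesgue_integral_def
    by (rule Bochner_Integration.integral_cong) (auto simp: indicator_def)
  also have "\<dots> = (LINT p:S|lborel. lerch_integrand z (Suc n) a p * (1 - (z * of_real (fst p * snd p)) ^ N))"
  proof (rule set_lebesgue_integral_cong)
    show "S \<in> sets lborel"
      by (simp add: S_def borel_open open_Times)
    have "(\<Sum>k<N. z ^ k * log_kernel (a + of_nat k) n p)
        = lerch_integrand z (Suc n) a p * ((1 - z * of_real (fst p * snd p))
            * (\<Sum>k<N. (z * of_real (fst p * snd p)) ^ k))"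
      if "p \<in> S" for p
      using log_kernel_eq_lerch_integrand[OF that[unfolded S_def] assms(1)]
      by (simp add: sum_distrib_left power_mult_distrib ac_simps)
    then show "\<forall>p. p \<in> S \<longrightarrow> (\<Sum>k<N. z ^ k * log_kernel (a + of_nat k) n p)
        = lerch_integrand z (Suc n) a p * (1 - (z * of_real (fst p * snd p)) ^ N)"
      by (simp only: one_diff_power_eq) blast
  qed
  finally show ?thesis
    by (simp only: S_def)
qed

lemma lerch_phi_eq_double_integral:
  assumes "s > 1" "lerch_defined z s a"
    and "set_integrable lborel ({0<..<1} \<times> {0<..<1}) (lerch_integrand z s a)"
  shows "lerch_phi z s a = (- of_nat s / of_nat (fact (s - 1))) *
           (LINT p:{0<..<1} \<times> {0<..<1}|lborel. lerch_integrand z s a p)"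
proof -
  obtain n where s: "s = Suc n"
    using assms(1) by (cases s) auto
  define S :: "(real \<times> real) set" where "S = {0<..<1} \<times> {0<..<1}"
  have "norm z \<le> 1"
    using assms(2) by (rule lerch_defined_imp_norm_le_1)
  note integrable = set_integrable_log_kernel_shift[OF \<open>norm z \<le> 1\<close> assms(3)[unfolded s]]
  (* Re a > 0 is not assumed: it is forced by integrability of the Lerch integrand. *)
  have "Re a > 0"
    using log_kernel_integrable_imp_Re_pos integrable[of 0] by simp
  have "z ^ k * (LINT p:S|lborel. log_kernel (a + of_nat k) n p)
      = - (fact n / of_nat (Suc n)) * (z ^ k / (of_nat k + a) ^ s)" for k
    using set_integral_log_kernel[OF _ integrable[of k]] \<open>Re a > 0\<close>
    by (simp add: S_def s add.commute)
  moreover have "summable (\<lambda>k. z ^ k / (of_nat k + a) ^ s)"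
    using assms(2) by (simp add: lerch_defined_def)
  then have "(\<lambda>N. - (fact n / of_nat (Suc n)) * (\<Sum>k<N. z ^ k / (of_nat k + a) ^ s))
      \<longlonglongrightarrow> - (fact n / of_nat (Suc n)) * lerch_phi z s a"
    unfolding lerch_phi_def by (intro tendsto_mult_left summable_LIMSEQ)
  ultimately have "(\<lambda>N. \<Sum>k<N. z ^ k * (LINT p:S|lborel. log_kernel (a + of_nat k) n p))
      \<longlonglongrightarrow> - (fact n / of_nat (Suc n)) * lerch_phi z s a"
    by (simp only: sum_distrib_left)
  moreover have "(\<lambda>N. LINT p:S|lborel. lerch_integrand z s a p * (1 - (z * of_real (fst p * snd p)) ^ N))
      \<longlonglongrightarrow> (LINT p:S|lborel. lerch_integrand z s a p)"
  proof (rule tendsto_set_integral_mult_one_minus_power)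
    show "set_integrable lborel S (lerch_integrand z s a)"
      using assms(3) by (simp add: S_def)
    show "(\<lambda>p. z * complex_of_real (fst p * snd p)) \<in> borel_measurable lborel"
      unfolding lborel_prod[symmetric] by measurable
    show "norm (z * complex_of_real (fst p * snd p)) < 1" if "p \<in> S" for p
      using norm_mult_fst_mult_snd_lt_1 that \<open>norm z \<le> 1\<close> by (simp add: S_def)
  qed
  ultimately have "(LINT p:S|lborel. lerch_integrand z s a p) = - (fact n / of_nat (Suc n)) * lerch_phi z s a"
    unfolding S_def s set_integral_lerch_partial_sum[OF \<open>norm z \<le> 1\<close> assms(3)[unfolded s]]
    by (rule LIMSEQ_unique[rotated])
  then show ?thesis
    by (simp add: S_def s field_simps del: of_nat_Suc)
qed

lemma summable_one_div_Suc_power: "s > 1 \<Longrightarrow> summable (\<lambda>k. 1 / real (Suc k) ^ s)"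
  using inverse_power_summable[of s] by (subst summable_Suc_iff) (simp add: divide_inverse)

lemma lerch_terms_1_1: "(\<lambda>k. (1::complex) ^ k / (of_nat k + 1) ^ s) = (\<lambda>k. complex_of_real (1 / real (Suc k) ^ s))"
  by (auto simp: add.commute)

lemma lerch_defined_1_1:
  assumes "s > 1"
  shows "lerch_defined 1 s 1"
proof -
  have "of_nat k + (1::complex) \<noteq> 0" for k
    by (metis of_nat_Suc of_nat_eq_0_iff add.commute nat.distinct(1))
  moreover have "summable (\<lambda>k. complex_of_real (1 / real (Suc k) ^ s))"
    using summable_one_div_Suc_power[OF assms] by (simp only: summable_complex_of_real)
  ultimately show ?thesis
    unfolding lerch_defined_def lerch_terms_1_1 by blast
qed

lemma lerch_phi_1_1: "s > 1 \<Longrightarrow> lerch_phi 1 s 1 = complex_of_real (riemann_zeta s)"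
  unfolding lerch_phi_def riemann_zeta_def lerch_terms_1_1
  by (rule suminf_of_real[OF summable_one_div_Suc_power, symmetric])

lemma lerch_integrand_1_1:
  assumes "0 < x" "0 < y"
  shows "lerch_integrand 1 (Suc n) 1 (x, y) = complex_of_real ((- 1) ^ n * zeta_integrand (Suc n) (x, y))"
proof -
  have "(- complex_of_real (ln y)) ^ n = (- 1) ^ n * complex_of_real (ln y) ^ n"
    by (rule power_minus)
  with assms show ?thesis
    by (simp add: lerch_integrand_def zeta_integrand_def)
qed

lemma zeta_eq_double_integral:
  assumes "s > 1" and "set_integrable lborel ({0<..<1} \<times> {0<..<1}) (zeta_integrand s)"
  shows "riemann_zeta s = real s / fact (s - 1) * (-1) ^ s *
           (LINT p:{0<..<1} \<times> {0<..<1}|lborel. zeta_integrand s p)"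
proof -
  obtain n where s: "s = Suc n"
    using assms(1) by (cases s) auto
  define S :: "(real \<times> real) set" where "S = {0<..<1} \<times> {0<..<1}"
  have S_sets: "S \<in> sets lborel"
    by (simp add: S_def borel_open open_Times)
  have eq: "\<forall>p. p \<in> S \<longrightarrow> lerch_integrand 1 s 1 p = complex_of_real ((- 1) ^ n * zeta_integrand s p)"
    by (auto simp: S_def s lerch_integrand_1_1)
  have "set_integrable lborel S (\<lambda>p. (- 1) ^ n * zeta_integrand s p)"
    using assms(2) by (simp add: S_def)
  from integrable_of_real[OF this[unfolded set_integrable_def]]
  have "set_integrable lborel S (\<lambda>p. complex_of_real ((- 1) ^ n * zeta_integrand s p))"
    unfolding set_integrable_def by (simp add: scaleR_conv_of_real)
  moreover have "set_integrable lborel S (lerch_integrand 1 s 1)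
      \<longleftrightarrow> set_integrable lborel S (\<lambda>p. complex_of_real ((- 1) ^ n * zeta_integrand s p))"
    using eq by (intro set_integrable_cong) auto
  ultimately have "set_integrable lborel S (lerch_integrand 1 s 1)"
    by blast
  then have "lerch_phi 1 s 1 = - of_nat s / of_nat (fact n) * (LINT p:S|lborel. lerch_integrand 1 s 1 p)"
    using lerch_phi_eq_double_integral[OF assms(1) lerch_defined_1_1[OF assms(1)]] by (simp add: S_def s)
  also have "(LINT p:S|lborel. lerch_integrand 1 s 1 p)
      = complex_of_real (LINT p:S|lborel. (- 1) ^ n * zeta_integrand s p)"
    unfolding set_lebesgue_integral_cong[OF S_sets eq] by (rule set_integral_complex_of_real)
  finally have "complex_of_real (riemann_zeta s)
      = complex_of_real (- real s / fact n * (LINT p:S|lborel. (- 1) ^ n * zeta_integrand s p))"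
    unfolding lerch_phi_1_1[OF assms(1)] by simp
  then have "riemann_zeta s = - real s / fact n * (LINT p:S|lborel. (- 1) ^ n * zeta_integrand s p)"
    by (simp only: of_real_eq_iff)
  then show ?thesis
    by (simp add: S_def s algebra_simps)
qed

theorem theorem3p2:
  fixes s :: nat
  assumes "s > 1"
  shows "(\<forall>(z::complex) (a::complex).
            lerch_defined z s a \<and>
            set_integrable lborel ({0<..<1} \<times> {0<..<1}) (lerch_integrand z s a)
            \<longrightarrow> lerch_phi z s a =
                 (- of_nat s / of_nat (fact (s - 1))) *
                 (LINT p : {0<..<1} \<times> {0<..<1} | lborel. lerch_integrand z s a p))
       \<and> (set_integrable lborel ({0<..<1} \<times> {0<..<1}) (zeta_integrand s)
            \<longrightarrow> riemann_zeta s =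
                 real s / fact (s - 1) * (-1) ^ s *
                 (LINT p : {0<..<1} \<times> {0<..<1} | lborel. zeta_integrand s p))"
  using lerch_phi_eq_double_integral[OF assms] zeta_eq_double_integral[OF assms] by blast

end
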